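(* Suppose $\dim_{\mathbb{C}}N=n-m\le 3$, where $N=\mathrm{span}_{\mathbb{C}}\{I_{m+1},\dots,I_n\}$ is the nilpotent subalgebra of $\mathbb{A}_n^m$. Then for every circle $C$ as described in the context, $\lambda:=\int_C\zeta^{-1}\,d\zeta=2\pi i$ (that is, $2\pi i$ times the unit of $\mathbb{A}_n^m$).
   Context: Fix natural numbers $m\le n$. $\mathbb{A}_n^m$ is a commutative associative algebra with unit over $\mathbb{C}$ with a basis $\{I_k\}_{k=1}^n$ satisfying: (1) for $r,s\in\{1,\dots,m\}$, $I_rI_s=0$ if $r\ne s$ and $I_rI_r=I_r$; (2) for $r,s\in\{m+1,\dots,n\}$, $I_rI_s=\sum_{k=\max\{r,s\}+1}^{n}\Upsilon^{s}_{r,k}I_k$ with constants $\Upsilon^s_{r,k}\in\mathbb{C}$; (3) for each $s\in\{m+1,\dots,n\}$ there is a unique $u_s\in\{1,\dots,m\}$ such that for $r\in\{1,\dots,m\}$, $I_rI_s=I_s$ if $r=u_s$ and $0$ otherwise. Unit $1=\sum_{u=1}^mI_u$; $\mathbb{A}_n^m=S\oplus_sN$ with $S=\mathrm{span}\{I_1,\dots,I_m\}$ and $N=\mathrm{span}\{I_{m+1},\dots,I_n\}$. $f_u(\sum_k\lambda_kI_k)=\lambda_u$. Let $e_1=1$, $e_2=\sum_ka_kI_k$, $e_3=\sum_kb_kI_k$ ($a_k,b_k\in\mathbb{C}$) be linearly independent over $\mathbb{R}$; $\zeta=xe_1+ye_2+ze_3$ ($x,y,z\in\mathbb{R}$), $E_3$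 their real span. Standing assumption: $f_u(E_3)=\mathbb{C}$ for all $u=1,\dots,m$. $\zeta$ is non-invertible exactly when $(x,y,z)$ lies on one of the lines $L_u=\{x+y\,\mathrm{Re}\,a_u+z\,\mathrm{Re}\,b_u=0,\ y\,\mathrm{Im}\,a_u+z\,\mathrm{Im}\,b_u=0\}$. The circle: $C\subset E_3$ is $C=\{xe_1+ye_2+ze_3:(x,y,z)\in C'\}$ for a Euclidean circle $C'\subset\mathbb{R}^3$ of radius $R>0$ centered at the origin, such that for every $u$ the image $f_u(C)$ is a positively oriented closed Jordan curve in $\mathbb{C}$ bounding a domain containing $0$. Integral: for a Jordan rectifiable curve $\gamma$ and continuous $\Psi=\sum_k(U_k+iV_k)I_k$ on $\gamma_\zeta$, $\int_{\gamma_\zeta}\Psi d\zeta:=\sum_kI_k\int_\gamma(U_k+iV_k)dx+\sum_ke_2I_k\int_\gamma(U_k+iV_k)dy+\sum_ke_3I_k\int_\gamma(U_k+iV_k)dz$. *)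

theory Defs
  imports "HOL-Complex_Analysis.Complex_Analysis"
begin

text \<open>Elements of the algebra A_n^m are coefficient vectors (nat => complex)
  w.r.t. the basis I_1,...,I_n, supported on {1..n}.
  Parameters: m n (dimensions), Ups s r k = Upsilon^s_{r,k}, u s = u_s.\<close>

definition alg_elem :: "nat \<Rightarrow> (nat \<Rightarrow> complex) \<Rightarrow> bool" where
  "alg_elem n v \<longleftrightarrow> (\<forall>k. k \<notin> {1..n} \<longrightarrow> v k = 0)"

definition basis_vec :: "nat \<Rightarrow> nat \<Rightarrow> complex" where
  "basis_vec r = (\<lambda>k. if k = r then 1 else 0)"

definition basis_mult ::
  "nat \<Rightarrow> nat \<Rightarrow> (nat \<Rightarrow> nat \<Rightarrow> nat \<Rightarrow> complex) \<Rightarrow> (nat \<Rightarrow> nat) \<Rightarrow> nat \<Rightarrow> nat \<Rightarrow> nat \<Rightarrow> complex" where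
  "basis_mult m n Ups u r s =
     (if r \<le> m \<and> s \<le> m then (if r = s then basis_vec r else (\<lambda>_. 0))
      else if m < r \<and> m < s then (\<lambda>k. if max r s < k \<and> k \<le> n then Ups s r k else 0)
      else if r \<le> m then (if r = u s then basis_vec s else (\<lambda>_. 0))
      else (if s = u r then basis_vec r else (\<lambda>_. 0)))"

definition alg_mult ::
  "nat \<Rightarrow> nat \<Rightarrow> (nat \<Rightarrow> nat \<Rightarrow> nat \<Rightarrow> complex) \<Rightarrow> (nat \<Rightarrow> nat)
   \<Rightarrow> (nat \<Rightarrow> complex) \<Rightarrow> (nat \<Rightarrow> complex) \<Rightarrow> nat \<Rightarrow> complex" where
  "alg_mult m n Ups u a b =
     (\<lambda>k. \<Sum>r\<in>{1..n}. \<Sum>s\<in>{1..n}. a r * b s * basis_mult m n Ups u r s k)"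

definition is_algebra_Anm ::
  "nat \<Rightarrow> nat \<Rightarrow> (nat \<Rightarrow> nat \<Rightarrow> nat \<Rightarrow> complex) \<Rightarrow> (nat \<Rightarrow> nat) \<Rightarrow> bool" where
  "is_algebra_Anm m n Ups u \<longleftrightarrow>
     1 \<le> m \<and> m \<le> n \<and>
     (\<forall>s\<in>{m+1..n}. u s \<in> {1..m}) \<and>
     (\<forall>a b. alg_elem n a \<longrightarrow> alg_elem n b \<longrightarrow> alg_mult m n Ups u a b = alg_mult m n Ups u b a) \<and>
     (\<forall>a b c. alg_elem n a \<longrightarrow> alg_elem n b \<longrightarrow> alg_elem n c \<longrightarrow>
        alg_mult m n Ups u (alg_mult m n Ups u a b) c = alg_mult m n Ups u a (alg_mult m n Ups u b c))"

definition alg_one :: "nat \<Rightarrow> nat \<Rightarrow> complex" where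
  "alg_one m = (\<lambda>k. if 1 \<le> k \<and> k \<le> m then 1 else 0)"

text \<open>Inverse (meaningful for invertible elements, where it is unique).\<close>
definition alg_inv ::
  "nat \<Rightarrow> nat \<Rightarrow> (nat \<Rightarrow> nat \<Rightarrow> nat \<Rightarrow> complex) \<Rightarrow> (nat \<Rightarrow> nat)
   \<Rightarrow> (nat \<Rightarrow> complex) \<Rightarrow> nat \<Rightarrow> complex" where
  "alg_inv m n Ups u a = (SOME b. alg_elem n b \<and> alg_mult m n Ups u a b = alg_one m)"

definition restr :: "nat \<Rightarrow> (nat \<Rightarrow> complex) \<Rightarrow> nat \<Rightarrow> complex" where
  "restr n c = (\<lambda>k. if k \<in> {1..n} then c k else 0)"

text \<open>zeta = x e_1 + y e_2 + z e_3, with e_1 = 1, e_2 = sum a_k I_k, e_3 = sum b_k I_k;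
  the point (x,y,z) is P $ 1, P $ 2, P $ 3.\<close>
definition zeta :: "nat \<Rightarrow> nat \<Rightarrow> (nat \<Rightarrow> complex) \<Rightarrow> (nat \<Rightarrow> complex) \<Rightarrow> real^3 \<Rightarrow> nat \<Rightarrow> complex" where
  "zeta m n a b P = (\<lambda>k. of_real (P $ 1) * alg_one m k + of_real (P $ 2) * restr n a k
                         + of_real (P $ 3) * restr n b k)"

definition f_coord :: "nat \<Rightarrow> (nat \<Rightarrow> complex) \<Rightarrow> complex" where
  "f_coord u w = w u"

definition line_int :: "(real \<Rightarrow> real^3) \<Rightarrow> (real^3 \<Rightarrow> complex) \<Rightarrow> 3 \<Rightarrow> complex" where
  "line_int \<gamma> g j = integral {0..2*pi} (\<lambda>t. g (\<gamma> t) * of_real (vector_derivative \<gamma> (at t) $ j))"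

text \<open>The hypercomplex integral
  int Psi d zeta = sum_k I_k int Psi_k dx + sum_k e_2 I_k int Psi_k dy + sum_k e_3 I_k int Psi_k dz.\<close>
definition alg_integral ::
  "nat \<Rightarrow> nat \<Rightarrow> (nat \<Rightarrow> nat \<Rightarrow> nat \<Rightarrow> complex) \<Rightarrow> (nat \<Rightarrow> nat) \<Rightarrow> (nat \<Rightarrow> complex) \<Rightarrow> (nat \<Rightarrow> complex)
   \<Rightarrow> (real \<Rightarrow> real^3) \<Rightarrow> (real^3 \<Rightarrow> nat \<Rightarrow> complex) \<Rightarrow> nat \<Rightarrow> complex" where
  "alg_integral m n Ups u a b \<gamma> \<Psi> =
    (let X = restr n (\<lambda>k. line_int \<gamma> (\<lambda>P. \<Psi> P k) 1);
         Y = restr n (\<lambda>k. line_int \<gamma> (\<lambda>P. \<Psi> P k) 2);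
         Z = restr n (\<lambda>k. line_int \<gamma> (\<lambda>P. \<Psi> P k) 3)
     in (\<lambda>k. X k + alg_mult m n Ups u (restr n a) Y k + alg_mult m n Ups u (restr n b) Z k))"

text \<open>Positively oriented parametrisation of the circle C' of radius R centred at 0
  in the plane spanned by the orthonormal vectors p, q (both orientations arise by
  swapping q with -q).\<close>
definition circ :: "real \<Rightarrow> real^3 \<Rightarrow> real^3 \<Rightarrow> real \<Rightarrow> real^3" where
  "circ R p q t = R *\<^sub>R (cos t *\<^sub>R p + sin t *\<^sub>R q)"

end

theory Submission
  imports Defs "HOL-Algebra.Ring"
begin

text \<open>Write \<open>\<zeta> = d\<^sup>-\<^sup>1 (1 + \<nu>)\<close>, where \<open>d\<^sup>-\<^sup>1\<close> is the semisimple part of \<open>\<zeta>\<close> (its coordinates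
  \<open>f\<^sub>u(\<zeta>)\<close>, \<open>u \<le> m\<close>, do not vanish on \<open>C\<close>) and \<open>\<nu> \<in> N\<close>. Since \<open>dim N \<le> 3\<close> we have \<open>N\<^sup>4 = 0\<close>,
  so \<open>\<zeta>\<^sup>-\<^sup>1 = d (1 - \<nu> + \<nu>\<^sup>2 - \<nu>\<^sup>3)\<close>. The integral of \<open>\<zeta>\<^sup>-\<^sup>1 d\<zeta>\<close> over a parametrised curve \<open>\<gamma>\<close> is
  \<open>\<integral> \<zeta>(\<gamma>)\<^sup>-\<^sup>1 \<zeta>(\<gamma>') dt\<close>, and along the curve \<open>\<zeta>\<^sup>-\<^sup>1 \<zeta>'\<close> splits into its semisimple part, whose
  coordinates \<open>f\<^sub>u(\<zeta>)'/f\<^sub>u(\<zeta>)\<close> integrate to \<open>2\<pi>i\<close> because \<open>f\<^sub>u(C)\<close> winds once around \<open>0\<close>, and the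
  derivative of the polynomial \<open>log (1 + \<nu>) = \<nu> - \<nu>\<^sup>2/2 + \<nu>\<^sup>3/3\<close>, which integrates to \<open>0\<close> over a
  closed curve.\<close>

section \<open>Truncated series in a commutative ring\<close>

lemma (in cring) truncated_geometric_inverse:
  assumes carr: "d \<in> carrier R" "w \<in> carrier R" "\<nu> \<in> carrier R"
    and unipotent: "d \<otimes> w = \<one> \<oplus> \<nu>"
    and nil: "\<nu> \<otimes> \<nu> \<otimes> \<nu> \<otimes> \<nu> = \<zero>"
  shows "w \<otimes> (d \<otimes> (\<one> \<ominus> \<nu> \<oplus> \<nu> \<otimes> \<nu> \<ominus> \<nu> \<otimes> \<nu> \<otimes> \<nu>)) = \<one>"
proof -
  define P where "P = \<one> \<ominus> \<nu> \<oplus> \<nu> \<otimes> \<nu> \<ominus> \<nu> \<otimes> \<nu> \<otimes> \<nu>"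
  have P: "P \<in> carrier R"
    unfolding P_def using carr by simp
  have "(\<one> \<oplus> \<nu>) \<otimes> P = \<one> \<ominus> \<nu> \<otimes> \<nu> \<otimes> \<nu> \<otimes> \<nu>"
    unfolding P_def using carr by algebra
  then have "(d \<otimes> w) \<otimes> P = \<one>"
    unfolding unipotent nil using carr by (simp add: a_minus_def)
  then show "w \<otimes> (d \<otimes> P) = \<one>"
    using carr P by algebra
qed

text \<open>Read \<open>w'\<close> as the velocity of a curve through \<open>w = d\<^sup>-\<^sup>1 (1 + \<nu>)\<close> along which \<open>d' = -d\<^sup>2 s\<close>;
  then \<open>\<nu>'\<close> is the velocity of \<open>\<nu>\<close>, and the identity says \<open>w\<^sup>-\<^sup>1 w' = d s + (log (1 + \<nu>))'\<close>.\<close>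
lemma (in cring) truncated_log_derivative:
  assumes carr: "d \<in> carrier R" "w \<in> carrier R" "w' \<in> carrier R" "s \<in> carrier R"
      "\<nu> \<in> carrier R" "\<nu>' \<in> carrier R"
    and unipotent: "d \<otimes> w = \<one> \<oplus> \<nu>"
    and nu': "\<nu>' = d \<otimes> w' \<ominus> d \<otimes> d \<otimes> s \<otimes> w"
    and nil: "\<nu> \<otimes> \<nu> \<otimes> \<nu> \<otimes> \<nu> = \<zero>" "\<nu> \<otimes> \<nu> \<otimes> \<nu> \<otimes> \<nu>' = \<zero>"
  shows "d \<otimes> (\<one> \<ominus> \<nu> \<oplus> \<nu> \<otimes> \<nu> \<ominus> \<nu> \<otimes> \<nu> \<otimes> \<nu>) \<otimes> w'
         = d \<otimes> s \<oplus> (\<nu>' \<ominus> \<nu> \<otimes> \<nu>' \<oplus> \<nu> \<otimes> \<nu> \<otimes> \<nu>')"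
proof -
  define P where "P = \<one> \<ominus> \<nu> \<oplus> \<nu> \<otimes> \<nu> \<ominus> \<nu> \<otimes> \<nu> \<otimes> \<nu>"
  have P: "P \<in> carrier R"
    unfolding P_def using carr by simp
  have "w \<otimes> (d \<otimes> P) = \<one>"
    unfolding P_def by (rule truncated_geometric_inverse[OF carr(1,2,5) unipotent nil(1)])
  then have inverse: "(d \<otimes> w) \<otimes> P = \<one>"
    using carr P by algebra
  have "d \<otimes> P \<otimes> w' = P \<otimes> \<nu>' \<oplus> d \<otimes> s \<otimes> ((d \<otimes> w) \<otimes> P)"
    unfolding nu' using carr P by algebra
  also have "P \<otimes> \<nu>' = \<nu>' \<ominus> \<nu> \<otimes> \<nu>' \<oplus> \<nu> \<otimes> \<nu> \<otimes> \<nu>' \<ominus> \<nu> \<otimes> \<nu> \<otimes> \<nu> \<otimes> \<nu>'"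
    unfolding P_def using carr by algebra
  finally show "d \<otimes> P \<otimes> w' = d \<otimes> s \<oplus> (\<nu>' \<ominus> \<nu> \<otimes> \<nu>' \<oplus> \<nu> \<otimes> \<nu> \<otimes> \<nu>')"
    unfolding inverse nil using carr by algebra
qed

section \<open>Winding numbers\<close>

lemma nonzero_if_not_in_path_image:
  assumes "0 \<notin> path_image (\<lambda>s. w (2 * pi * s))" "t \<in> {0..2 * pi}"
  shows "w t \<noteq> 0"
proof -
  have "t / (2 * pi) \<in> {0..1}"
    using assms(2) by auto
  then have "w (2 * pi * (t / (2 * pi))) \<noteq> 0"
    using assms(1) unfolding path_image_def by (metis image_eqI)
  then show ?thesis
    by simp
qed

lemma has_integral_log_derivative_winding_number:
  fixes w w' :: "real \<Rightarrow> complex"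
  assumes w_der: "\<And>t. (w has_vector_derivative w' t) (at t)"
    and w'_cont: "continuous_on {0..2 * pi} w'"
    and avoids_0: "0 \<notin> path_image (\<lambda>s. w (2 * pi * s))"
    and winding: "winding_number (\<lambda>s. w (2 * pi * s)) 0 = 1"
  shows "((\<lambda>t. w' t / w t) has_integral 2 * pi * \<i>) {0..2 * pi}"
proof -
  define g where "g = (\<lambda>s. w (2 * pi * s))"
  define g' where "g' s = of_real (2 * pi) * w' (2 * pi * s)" for s
  have g_der: "(g has_vector_derivative g' s) (at s)" for s
  proof -
    have "((\<lambda>s. 2 * pi * s) has_vector_derivative 2 * pi) (at s)"
      using has_vector_derivative_mult_right[OF has_vector_derivative_id, of "2 * pi"] by simp
    from vector_diff_chain_at[OF this w_der] show ?thesis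
      by (simp add: g_def g'_def o_def scaleR_conv_of_real)
  qed
  have "continuous_on {0..1} g'"
    unfolding g'_def
    by (intro continuous_intros continuous_on_compose2[OF w'_cont]) auto
  then have "valid_path g"
    unfolding valid_path_def using g_der
    by (intro C1_differentiable_imp_piecewise) (auto simp: C1_differentiable_on_def)
  then have "((\<lambda>z. 1 / (z - 0)) has_contour_integral 2 * pi * \<i>) g"
    using has_contour_integral_winding_number[of g 0] avoids_0 winding by (simp add: g_def)
  then have "((\<lambda>s. g' s / g s) has_integral 2 * pi * \<i>) {0..1}"
    unfolding has_contour_integral vector_derivative_at[OF g_der] by simp
  then have "((\<lambda>s. of_real (2 * pi) * (w' (2 * pi * s) / w (2 * pi * s))) has_integral 2 * pi * \<i>) (cbox 0 1)"
    by (simp add: g_def g'_def)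
  from has_integral_affinity[OF this, of "1 / (2 * pi)" 0]
  have "((\<lambda>t. of_real (2 * pi) * (w' t / w t)) has_integral (2 * pi) *\<^sub>R (2 * pi * \<i>)) {0..2 * pi}"
    by (simp add: image_mult_atLeastAtMost)
  from has_integral_mult_right[OF this, of "of_real (1 / (2 * pi))"]
  show ?thesis by (simp add: scaleR_conv_of_real mult_ac)
qed

section \<open>The algebra \<open>\<bbbA>\<^sub>n\<^sup>m\<close>\<close>

locale Anm_algebra =
  fixes m n :: nat and Ups :: "nat \<Rightarrow> nat \<Rightarrow> nat \<Rightarrow> complex" and u :: "nat \<Rightarrow> nat"
  assumes is_algebra: "is_algebra_Anm m n Ups u"
begin

abbreviation mul :: "(nat \<Rightarrow> complex) \<Rightarrow> (nat \<Rightarrow> complex) \<Rightarrow> nat \<Rightarrow> complex"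
  where "mul \<equiv> alg_mult m n Ups u"

abbreviation e1 :: "nat \<Rightarrow> complex"
  where "e1 \<equiv> alg_one m"

lemma m_le_n: "m \<le> n"
  and u_range: "s \<in> {m+1..n} \<Longrightarrow> u s \<in> {1..m}"
  using is_algebra unfolding is_algebra_Anm_def by auto

lemma basis_mult_outside:
  "k \<notin> {1..n} \<Longrightarrow> r \<in> {1..n} \<Longrightarrow> s \<in> {1..n} \<Longrightarrow> basis_mult m n Ups u r s k = 0"
  by (auto simp: basis_mult_def basis_vec_def)

lemma alg_elem_mul: "alg_elem n (mul x y)"
  unfolding alg_elem_def alg_mult_def by (auto simp: basis_mult_outside)

lemma alg_elem_restr: "alg_elem n (restr n x)"
  unfolding alg_elem_def restr_def by auto

lemma restr_alg_elem: "alg_elem n x \<Longrightarrow> restr n x = x"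
  unfolding alg_elem_def restr_def by auto

lemma alg_elem_one: "alg_elem n e1"
  using m_le_n unfolding alg_elem_def alg_one_def by auto

lemma mul_restr: "mul x y = mul (restr n x) (restr n y)"
  unfolding alg_mult_def restr_def by (intro ext sum.cong) auto

lemma mul_commute: "mul x y = mul y x"
  using is_algebra alg_elem_restr unfolding is_algebra_Anm_def by (metis mul_restr)

lemma mul_assoc: "mul (mul x y) z = mul x (mul y z)"
proof -
  have "mul (mul x y) z = mul (mul (restr n x) (restr n y)) (restr n z)"
    by (metis mul_restr restr_alg_elem alg_elem_mul)
  also have "\<dots> = mul (restr n x) (mul (restr n y) (restr n z))"
    using is_algebra alg_elem_restr unfolding is_algebra_Anm_def by blast
  also have "\<dots> = mul x (mul y z)"
    by (metis mul_restr restr_alg_elem alg_elem_mul)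
  finally show ?thesis .
qed

lemma mul_one_left: "mul e1 x = restr n x"
proof
  fix k
  have unit_column: "(\<Sum>r\<in>{1..n}. e1 r * basis_mult m n Ups u r s k) = basis_vec s k"
    if s: "s \<in> {1..n}" for s
  proof -
    define r0 where "r0 = (if s \<le> m then s else u s)"
    have "r0 \<in> {1..n}"
      using s u_range[of s] m_le_n by (auto simp: r0_def)
    moreover have "e1 r * basis_mult m n Ups u r s k = (if r = r0 then basis_vec s k else 0)"
      if "r \<in> {1..n}" for r
      using s that u_range[of s] by (auto simp: r0_def alg_one_def basis_mult_def basis_vec_def)
    ultimately show ?thesis
      by (simp add: sum.delta')
  qed
  have "mul e1 x k = (\<Sum>s\<in>{1..n}. x s * (\<Sum>r\<in>{1..n}. e1 r * basis_mult m n Ups u r s k))"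
    unfolding alg_mult_def by (subst sum.swap) (simp add: sum_distrib_left algebra_simps)
  also have "\<dots> = (\<Sum>s\<in>{1..n}. x s * basis_vec s k)"
    by (intro sum.cong refl) (simp only: unit_column)
  also have "\<dots> = restr n x k"
    by (auto simp: basis_vec_def restr_def if_distrib sum.delta' cong: if_cong)
  finally show "mul e1 x k = restr n x k" .
qed

lemma mul_add_left: "mul (\<lambda>k. x k + y k) z = (\<lambda>k. mul x z k + mul y z k)"
  unfolding alg_mult_def by (simp add: algebra_simps sum.distrib)

lemma mul_add_right: "mul z (\<lambda>k. x k + y k) = (\<lambda>k. mul z x k + mul z y k)"
  unfolding alg_mult_def by (simp add: algebra_simps sum.distrib)

lemma mul_scale_right: "mul x (\<lambda>k. c * y k) = (\<lambda>k. c * mul x y k)"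
  unfolding alg_mult_def by (simp add: algebra_simps sum_distrib_left)

lemma mul_scale_left: "mul (\<lambda>k. c * x k) y = (\<lambda>k. c * mul x y k)"
  unfolding alg_mult_def by (simp add: algebra_simps sum_distrib_left)

lemma mul_uminus_left: "mul (\<lambda>k. - x k) y = (\<lambda>k. - mul x y k)"
  using mul_scale_left[of "-1" x y] by simp

definition Alg :: "(nat \<Rightarrow> complex) ring" where
  "Alg = \<lparr>carrier = {x. alg_elem n x}, monoid.mult = mul, one = e1,
          zero = (\<lambda>_. 0), add = (\<lambda>x y k. x k + y k)\<rparr>"

lemma Alg_simps [simp]:
  "carrier Alg = {x. alg_elem n x}" "x \<otimes>\<^bsub>Alg\<^esub> y = mul x y" "\<one>\<^bsub>Alg\<^esub> = e1"
  "\<zero>\<^bsub>Alg\<^esub> = (\<lambda>_. 0)" "x \<oplus>\<^bsub>Alg\<^esub> y = (\<lambda>k. x k + y k)"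
  by (simp_all add: Alg_def)

lemma cring_Alg: "cring Alg"
proof (rule cringI)
  show "abelian_group Alg"
  proof (rule abelian_groupI)
    fix x assume x: "x \<in> carrier Alg"
    have "alg_elem n (\<lambda>k. - x k)"
      using x by (simp add: alg_elem_def)
    moreover have "(\<lambda>k. - x k) \<oplus>\<^bsub>Alg\<^esub> x = \<zero>\<^bsub>Alg\<^esub>"
      by simp
    ultimately show "\<exists>y\<in>carrier Alg. y \<oplus>\<^bsub>Alg\<^esub> x = \<zero>\<^bsub>Alg\<^esub>"
      by force
  next
    fix x y assume "x \<in> carrier Alg" "y \<in> carrier Alg"
    then show "x \<oplus>\<^bsub>Alg\<^esub> y \<in> carrier Alg"
      by (simp add: alg_elem_def)
  next
    show "\<zero>\<^bsub>Alg\<^esub> \<in> carrier Alg"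
      by (simp add: alg_elem_def)
  next
    fix x y z
    show "(x \<oplus>\<^bsub>Alg\<^esub> y) \<oplus>\<^bsub>Alg\<^esub> z = x \<oplus>\<^bsub>Alg\<^esub> (y \<oplus>\<^bsub>Alg\<^esub> z)"
      by (simp add: add.assoc)
  next
    fix x y
    show "x \<oplus>\<^bsub>Alg\<^esub> y = y \<oplus>\<^bsub>Alg\<^esub> x"
      by (simp add: add.commute)
  next
    fix x
    show "\<zero>\<^bsub>Alg\<^esub> \<oplus>\<^bsub>Alg\<^esub> x = x"
      by simp
  qed
  show "comm_monoid Alg"
  proof (rule comm_monoidI)
    fix x y
    show "x \<otimes>\<^bsub>Alg\<^esub> y \<in> carrier Alg"
      by (simp add: alg_elem_mul)
  next
    show "\<one>\<^bsub>Alg\<^esub> \<in> carrier Alg"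
      by (simp add: alg_elem_one)
  next
    fix x y z
    show "x \<otimes>\<^bsub>Alg\<^esub> y \<otimes>\<^bsub>Alg\<^esub> z = x \<otimes>\<^bsub>Alg\<^esub> (y \<otimes>\<^bsub>Alg\<^esub> z)"
      by (simp only: Alg_simps mul_assoc)
  next
    fix x
    assume "x \<in> carrier Alg"
    then show "\<one>\<^bsub>Alg\<^esub> \<otimes>\<^bsub>Alg\<^esub> x = x"
      by (simp add: mul_one_left restr_alg_elem)
  next
    fix x y
    show "x \<otimes>\<^bsub>Alg\<^esub> y = y \<otimes>\<^bsub>Alg\<^esub> x"
      by (simp only: Alg_simps mul_commute[of x y])
  qed
qed (simp only: Alg_simps mul_add_left)

sublocale Alg: cring Alg
  by (rule cring_Alg)

lemma Alg_minus: "x \<in> carrier Alg \<Longrightarrow> \<ominus>\<^bsub>Alg\<^esub> x = (\<lambda>k. - x k)"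
  by (rule Alg.minus_equality) (auto simp: alg_elem_def)

lemma Alg_diff [simp]: "y \<in> carrier Alg \<Longrightarrow> x \<ominus>\<^bsub>Alg\<^esub> y = (\<lambda>k. x k - y k)"
  by (simp add: a_minus_def Alg_minus)

definition semisimple :: "(nat \<Rightarrow> complex) \<Rightarrow> bool" where
  "semisimple x \<longleftrightarrow> (\<forall>k. k \<notin> {1..m} \<longrightarrow> x k = 0)"

lemma semisimple_alg_elem: "semisimple x \<Longrightarrow> alg_elem n x"
  using m_le_n unfolding semisimple_def alg_elem_def by auto

lemma mul_coord_semisimple:
  assumes k: "k \<in> {1..m}"
  shows "mul x y k = x k * y k"
proof -
  have k_n: "k \<in> {1..n}"
    using k m_le_n by auto
  have row: "(\<Sum>s\<in>{1..n}. x r * y s * basis_mult m n Ups u r s k) = (if r = k then x k * y k else 0)"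
    if "r \<in> {1..n}" for r
  proof -
    have "basis_mult m n Ups u r s k = (if r = k \<and> s = k then 1 else 0)" if "s \<in> {1..n}" for s
      using k \<open>r \<in> {1..n}\<close> that by (auto simp: basis_mult_def basis_vec_def)
    then have "(\<Sum>s\<in>{1..n}. x r * y s * basis_mult m n Ups u r s k)
        = (\<Sum>s\<in>{1..n}. if r = k \<and> s = k then x r * y s else 0)"
      by (intro sum.cong refl) simp
    also have "\<dots> = (if r = k then x k * y k else 0)"
      using k_n by (cases "r = k") (simp_all add: sum.delta')
    finally show ?thesis .
  qed
  have "mul x y k = (\<Sum>r\<in>{1..n}. if r = k then x k * y k else 0)"
    unfolding alg_mult_def by (intro sum.cong refl row)
  then show ?thesis
    using k_n by (simp add: sum.delta')
qed

lemma mul_semisimple: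
  assumes "semisimple x" "semisimple y"
  shows "mul x y = (\<lambda>k. x k * y k)"
proof
  fix k
  show "mul x y k = x k * y k"
  proof (cases "k \<in> {1..m}")
    case True
    then show ?thesis by (rule mul_coord_semisimple)
  next
    case False
    have "x r * y s * basis_mult m n Ups u r s k = 0" for r s
      using assms False unfolding semisimple_def
      by (cases "r \<in> {1..m}"; cases "s \<in> {1..m}") (auto simp: basis_mult_def basis_vec_def)
    then have "mul x y k = 0"
      unfolding alg_mult_def by (intro sum.neutral ballI)
    then show ?thesis
      using assms False unfolding semisimple_def by simp
  qed
qed

text \<open>\<open>N\<^sup>d\<^sup>+\<^sup>1\<close> is contained in \<open>{x. vanishes_upto (m + d) x}\<close>, because \<open>I\<^sub>r I\<^sub>s\<close> only involves
  basis elements \<open>I\<^sub>k\<close> with \<open>k > max r s\<close>.\<close>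
definition vanishes_upto :: "nat \<Rightarrow> (nat \<Rightarrow> complex) \<Rightarrow> bool" where
  "vanishes_upto j x \<longleftrightarrow> (\<forall>k\<le>j. x k = 0)"

lemma vanishes_upto_mul:
  assumes "m \<le> i" "m \<le> j" "vanishes_upto i x" "vanishes_upto j y"
  shows "vanishes_upto (max i j + 1) (mul x y)"
  unfolding vanishes_upto_def
proof (intro allI impI)
  fix k
  assume k: "k \<le> max i j + 1"
  have term_vanishes: "x r * y s * basis_mult m n Ups u r s k = 0" for r s
  proof (cases "r \<le> i \<or> s \<le> j")
    case True
    then show ?thesis using assms(3,4) unfolding vanishes_upto_def by auto
  next
    case False
    then show ?thesis using assms(1,2) k by (auto simp: basis_mult_def)
  qed
  show "mul x y k = 0"
    unfolding alg_mult_def by (intro sum.neutral ballI term_vanishes)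
qed

text \<open>This is where \<open>dim N \<le> 3\<close> enters: \<open>N\<^sup>4 = 0\<close>.\<close>
lemma nilpotent_product:
  assumes small_N: "n - m \<le> 3"
    and "vanishes_upto m x1" "vanishes_upto m x2" "vanishes_upto m x3" "vanishes_upto m x4"
  shows "mul (mul (mul x1 x2) x3) x4 = (\<lambda>_. 0)"
proof
  fix k
  have "vanishes_upto (m + 3) (mul (mul (mul x1 x2) x3) x4)"
    using vanishes_upto_mul[OF _ _ vanishes_upto_mul[OF _ _ vanishes_upto_mul[OF _ _ assms(2,3)] assms(4)]
        assms(5)]
    by (simp add: numeral_3_eq_3)
  moreover have "alg_elem n (mul (mul (mul x1 x2) x3) x4)"
    by (rule alg_elem_mul)
  ultimately show "mul (mul (mul x1 x2) x3) x4 k = 0"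
    using small_N unfolding vanishes_upto_def alg_elem_def
    by (cases "k \<le> m + 3") auto
qed

section \<open>Inverses of elements with invertible semisimple part\<close>

definition diag_inverse :: "(nat \<Rightarrow> complex) \<Rightarrow> nat \<Rightarrow> complex" where
  "diag_inverse x = (\<lambda>k. if k \<in> {1..m} then inverse (x k) else 0)"

text \<open>With \<open>d = diag_inverse x\<close> one has \<open>x = d\<^sup>-\<^sup>1 (1 + \<nu>)\<close> where \<open>\<nu> = nilpotent_factor x \<in> N\<close>;
  \<open>nilpotent_factor_deriv x x'\<close> is the derivative of \<open>\<nu>\<close> in the direction \<open>x'\<close>.\<close>
definition nilpotent_factor :: "(nat \<Rightarrow> complex) \<Rightarrow> nat \<Rightarrow> complex" where
  "nilpotent_factor x = (\<lambda>k. mul (diag_inverse x) x k - e1 k)"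

definition nilpotent_factor_deriv :: "(nat \<Rightarrow> complex) \<Rightarrow> (nat \<Rightarrow> complex) \<Rightarrow> nat \<Rightarrow> complex" where
  "nilpotent_factor_deriv x x' =
     (\<lambda>k. mul (\<lambda>j. if j \<in> {1..m} then - x' j / (x j)\<^sup>2 else 0) x k + mul (diag_inverse x) x' k)"

lemma semisimple_diag_inverse: "semisimple (diag_inverse x)"
  unfolding semisimple_def diag_inverse_def by simp

lemma alg_elem_nilpotent_factor: "alg_elem n (nilpotent_factor x)"
  using alg_elem_mul[of "diag_inverse x" x] alg_elem_one
  unfolding nilpotent_factor_def alg_elem_def by simp

lemma alg_elem_nilpotent_factor_deriv: "alg_elem n (nilpotent_factor_deriv x x')"
  using alg_elem_mul unfolding nilpotent_factor_deriv_def alg_elem_def by simp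

lemma vanishes_upto_nilpotent_factor:
  assumes "\<And>k. k \<in> {1..m} \<Longrightarrow> x k \<noteq> 0"
  shows "vanishes_upto m (nilpotent_factor x)"
    and "vanishes_upto m (nilpotent_factor_deriv x x')"
proof -
  have "nilpotent_factor x 0 = 0" "nilpotent_factor_deriv x x' 0 = 0"
    using alg_elem_nilpotent_factor alg_elem_nilpotent_factor_deriv unfolding alg_elem_def by auto
  moreover have "nilpotent_factor x k = 0" "nilpotent_factor_deriv x x' k = 0" if "k \<in> {1..m}" for k
    using assms[OF that] that
    by (simp_all add: nilpotent_factor_def nilpotent_factor_deriv_def mul_coord_semisimple
        diag_inverse_def alg_one_def field_simps power2_eq_square)
  moreover have "k = 0 \<or> k \<in> {1..m}" if "k \<le> m" for k
    using that by auto
  ultimately show "vanishes_upto m (nilpotent_factor x)" "vanishes_upto m (nilpotent_factor_deriv x x')"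
    unfolding vanishes_upto_def by metis+
qed

lemma alg_inv_eqI:
  assumes "alg_elem n x" "alg_elem n y" "mul x y = e1"
  shows "alg_inv m n Ups u x = y"
  unfolding alg_inv_def
proof (rule some_equality)
  show "alg_elem n y \<and> mul x y = e1"
    using assms by simp
next
  fix z
  assume z: "alg_elem n z \<and> mul x z = e1"
  then have "z = mul z (mul x y)"
    using assms by (simp add: mul_commute[of z] mul_one_left restr_alg_elem)
  also have "\<dots> = mul (mul x z) y"
    by (metis mul_assoc mul_commute)
  also have "\<dots> = y"
    using assms z by (simp add: mul_one_left restr_alg_elem)
  finally show "z = y" .
qed

definition truncated_inverse :: "(nat \<Rightarrow> complex) \<Rightarrow> nat \<Rightarrow> complex" where
  "truncated_inverse x = (let \<nu> = nilpotent_factor x in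
     mul (diag_inverse x) (\<lambda>k. e1 k - \<nu> k + mul \<nu> \<nu> k - mul (mul \<nu> \<nu>) \<nu> k))"

lemma unipotent_nilpotent_factor:
  "diag_inverse x \<otimes>\<^bsub>Alg\<^esub> x = \<one>\<^bsub>Alg\<^esub> \<oplus>\<^bsub>Alg\<^esub> nilpotent_factor x"
  by (simp add: nilpotent_factor_def)

lemma mul_truncated_inverse:
  assumes small_N: "n - m \<le> 3" and x: "alg_elem n x"
    and invertible: "\<And>k. k \<in> {1..m} \<Longrightarrow> x k \<noteq> 0"
  shows "mul x (truncated_inverse x) = e1"
proof -
  define \<nu> where "\<nu> = nilpotent_factor x"
  have nil: "\<nu> \<otimes>\<^bsub>Alg\<^esub> \<nu> \<otimes>\<^bsub>Alg\<^esub> \<nu> \<otimes>\<^bsub>Alg\<^esub> \<nu> = \<zero>\<^bsub>Alg\<^esub>"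
    using nilpotent_product[OF small_N] vanishes_upto_nilpotent_factor(1)[OF invertible]
    by (simp add: \<nu>_def)
  have "x \<otimes>\<^bsub>Alg\<^esub> (diag_inverse x \<otimes>\<^bsub>Alg\<^esub>
      (\<one>\<^bsub>Alg\<^esub> \<ominus>\<^bsub>Alg\<^esub> \<nu> \<oplus>\<^bsub>Alg\<^esub> \<nu> \<otimes>\<^bsub>Alg\<^esub> \<nu> \<ominus>\<^bsub>Alg\<^esub> \<nu> \<otimes>\<^bsub>Alg\<^esub> \<nu> \<otimes>\<^bsub>Alg\<^esub> \<nu>)) = \<one>\<^bsub>Alg\<^esub>"
    using x semisimple_alg_elem[OF semisimple_diag_inverse] alg_elem_nilpotent_factor
    by (intro Alg.truncated_geometric_inverse nil unipotent_nilpotent_factor[of x, folded \<nu>_def])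
      (simp_all add: \<nu>_def)
  then show ?thesis
    by (simp add: truncated_inverse_def Let_def \<nu>_def alg_elem_mul alg_elem_nilpotent_factor)
qed

lemma alg_inv_eq_truncated_inverse:
  assumes small_N: "n - m \<le> 3" and x: "alg_elem n x"
    and invertible: "\<And>k. k \<in> {1..m} \<Longrightarrow> x k \<noteq> 0"
  shows "alg_inv m n Ups u x = truncated_inverse x"
  by (rule alg_inv_eqI[OF x _ mul_truncated_inverse[OF assms]])
    (simp add: truncated_inverse_def Let_def alg_elem_mul)

lemma mul_alg_inv_coord_semisimple:
  assumes small_N: "n - m \<le> 3" and x: "alg_elem n x"
    and invertible: "\<And>k. k \<in> {1..m} \<Longrightarrow> x k \<noteq> 0"
    and k: "k \<in> {1..m}"
  shows "mul (alg_inv m n Ups u x) x' k = x' k / x k"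
proof -
  have "mul x (alg_inv m n Ups u x) k = e1 k"
    using mul_truncated_inverse[OF assms(1-3)] alg_inv_eq_truncated_inverse[OF assms(1-3)] by simp
  then have "x k * alg_inv m n Ups u x k = 1"
    using k by (simp add: mul_coord_semisimple alg_one_def)
  then show ?thesis
    using invertible[OF k] k by (simp add: mul_coord_semisimple field_simps)
qed

text \<open>In the nilpotent coordinates, \<open>x\<^sup>-\<^sup>1 x'\<close> is the derivative of \<open>log (1 + \<nu>) = \<nu> - \<nu>\<^sup>2/2 + \<nu>\<^sup>3/3\<close>.\<close>
lemma mul_alg_inv_coord_nilpotent:
  assumes small_N: "n - m \<le> 3" and x: "alg_elem n x" and x': "alg_elem n x'"
    and invertible: "\<And>k. k \<in> {1..m} \<Longrightarrow> x k \<noteq> 0"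
    and k: "k \<notin> {1..m}"
  defines "\<nu> \<equiv> nilpotent_factor x" and "\<nu>' \<equiv> nilpotent_factor_deriv x x'"
  shows "mul (alg_inv m n Ups u x) x' k = \<nu>' k - mul \<nu> \<nu>' k + mul (mul \<nu> \<nu>) \<nu>' k"
proof -
  define d where "d = diag_inverse x"
  define s where "s = (\<lambda>j. if j \<in> {1..m} then x' j else 0)"
  have ss: "semisimple d" "semisimple s"
    using semisimple_diag_inverse[of x] unfolding d_def s_def semisimple_def by auto
  then have carr: "d \<in> carrier Alg" "s \<in> carrier Alg" "\<nu> \<in> carrier Alg" "\<nu>' \<in> carrier Alg"
    by (simp_all add: semisimple_alg_elem \<nu>_def \<nu>'_def alg_elem_nilpotent_factor
        alg_elem_nilpotent_factor_deriv)
  have "(\<lambda>j. if j \<in> {1..m} then - x' j / (x j)\<^sup>2 else 0) = (\<lambda>j. - mul (mul d d) s j)"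
    using ss invertible
    by (auto simp: mul_semisimple semisimple_def d_def s_def diag_inverse_def field_simps
        power2_eq_square)
  then have nu': "\<nu>' = d \<otimes>\<^bsub>Alg\<^esub> x' \<ominus>\<^bsub>Alg\<^esub> d \<otimes>\<^bsub>Alg\<^esub> d \<otimes>\<^bsub>Alg\<^esub> s \<otimes>\<^bsub>Alg\<^esub> x"
    by (simp add: \<nu>'_def nilpotent_factor_deriv_def d_def mul_uminus_left alg_elem_mul)
  have nil: "\<nu> \<otimes>\<^bsub>Alg\<^esub> \<nu> \<otimes>\<^bsub>Alg\<^esub> \<nu> \<otimes>\<^bsub>Alg\<^esub> \<nu> = \<zero>\<^bsub>Alg\<^esub>"
      "\<nu> \<otimes>\<^bsub>Alg\<^esub> \<nu> \<otimes>\<^bsub>Alg\<^esub> \<nu> \<otimes>\<^bsub>Alg\<^esub> \<nu>' = \<zero>\<^bsub>Alg\<^esub>"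
    using nilpotent_product[OF small_N] vanishes_upto_nilpotent_factor[OF invertible]
    by (simp_all add: \<nu>_def \<nu>'_def)
  define P where "P = (\<lambda>k. e1 k - \<nu> k + mul \<nu> \<nu> k - mul (mul \<nu> \<nu>) \<nu> k)"
  have "d \<otimes>\<^bsub>Alg\<^esub> (\<one>\<^bsub>Alg\<^esub> \<ominus>\<^bsub>Alg\<^esub> \<nu> \<oplus>\<^bsub>Alg\<^esub> \<nu> \<otimes>\<^bsub>Alg\<^esub> \<nu> \<ominus>\<^bsub>Alg\<^esub> \<nu> \<otimes>\<^bsub>Alg\<^esub> \<nu> \<otimes>\<^bsub>Alg\<^esub> \<nu>) \<otimes>\<^bsub>Alg\<^esub> x'
      = d \<otimes>\<^bsub>Alg\<^esub> s \<oplus>\<^bsub>Alg\<^esub>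
        (\<nu>' \<ominus>\<^bsub>Alg\<^esub> \<nu> \<otimes>\<^bsub>Alg\<^esub> \<nu>' \<oplus>\<^bsub>Alg\<^esub> \<nu> \<otimes>\<^bsub>Alg\<^esub> \<nu> \<otimes>\<^bsub>Alg\<^esub> \<nu>')"
    using x x' unipotent_nilpotent_factor[of x, folded \<nu>_def d_def]
    by (intro Alg.truncated_log_derivative[OF carr(1) _ _ carr(2-4) _ nu' nil]) simp_all
  then have log_derivative:
    "mul (mul d P) x' = (\<lambda>k. mul d s k + (\<nu>' k - mul \<nu> \<nu>' k + mul (mul \<nu> \<nu>) \<nu>' k))"
    using carr by (simp add: P_def alg_elem_mul)
  have "alg_inv m n Ups u x = mul d P"
    using alg_inv_eq_truncated_inverse[OF small_N x] invertible
    by (simp add: truncated_inverse_def Let_def \<nu>_def d_def P_def)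
  moreover have "mul d s k = 0"
    using ss k by (simp add: mul_semisimple semisimple_def)
  ultimately show ?thesis
    by (simp add: log_derivative)
qed

section \<open>Curves in \<open>\<bbbA>\<^sub>n\<^sup>m\<close>\<close>

lemma has_vector_derivative_mul:
  assumes "\<And>r. ((\<lambda>s. x s r) has_vector_derivative x' r) (at t within T)"
    and "\<And>r. ((\<lambda>s. y s r) has_vector_derivative y' r) (at t within T)"
  shows "((\<lambda>s. mul (x s) (y s) k) has_vector_derivative (mul x' (y t) k + mul (x t) y' k))
    (at t within T)"
proof -
  have "((\<lambda>s. \<Sum>r\<in>{1..n}. \<Sum>q\<in>{1..n}. x s r * y s q * basis_mult m n Ups u r q k)
    has_vector_derivative
      (\<Sum>r\<in>{1..n}. \<Sum>q\<in>{1..n}. (x t r * y' q + x' r * y t q) * basis_mult m n Ups u r q k))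
    (at t within T)"
    by (intro has_vector_derivative_sum has_vector_derivative_mult_left has_vector_derivative_mult
        assms)
  moreover have "(\<Sum>r\<in>{1..n}. \<Sum>q\<in>{1..n}. (x t r * y' q + x' r * y t q) * basis_mult m n Ups u r q k)
      = mul x' (y t) k + mul (x t) y' k"
    unfolding alg_mult_def by (simp add: algebra_simps sum.distrib)
  ultimately show ?thesis
    unfolding alg_mult_def by simp
qed

lemma continuous_on_mul:
  assumes "\<And>r. continuous_on S (\<lambda>s. x s r)" "\<And>r. continuous_on S (\<lambda>s. y s r)"
  shows "continuous_on S (\<lambda>s. mul (x s) (y s) k)"
  unfolding alg_mult_def by (intro continuous_intros assms)

lemma has_integral_mul_right:
  assumes "\<And>r. r \<in> {1..n} \<Longrightarrow> ((\<lambda>t. y t r) has_integral I r) S"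
  shows "((\<lambda>t. mul x (y t) k) has_integral mul x I k) S"
  unfolding alg_mult_def
  by (intro has_integral_sum finite_atLeastAtMost has_integral_mult_left has_integral_mult_right assms)

lemma has_vector_derivative_nilpotent_factor:
  assumes W_der: "\<And>r. ((\<lambda>s. W s r) has_vector_derivative W' r) (at t within T)"
    and invertible: "\<And>r. r \<in> {1..m} \<Longrightarrow> W t r \<noteq> 0"
  shows "((\<lambda>s. nilpotent_factor (W s) k) has_vector_derivative nilpotent_factor_deriv (W t) W' k)
    (at t within T)"
proof -
  have "((\<lambda>s. diag_inverse (W s) r) has_vector_derivative
      (if r \<in> {1..m} then - W' r / (W t r)\<^sup>2 else 0)) (at t within T)" for r
  proof (cases "r \<in> {1..m}")
    case True
    have "((inverse \<circ> (\<lambda>s. W s r)) has_vector_derivative W' r * - (inverse (W t r) ^ 2))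
        (at t within T)"
      using field_vector_diff_chain_within[OF W_der DERIV_inverse[OF invertible[OF True]]]
      by (simp add: numeral_2_eq_2)
    then show ?thesis
      using True invertible[OF True] by (simp add: diag_inverse_def o_def field_simps)
  next
    case False
    then have "(\<lambda>s. diag_inverse (W s) r) = (\<lambda>s. 0)"
      by (auto simp: diag_inverse_def)
    with False show ?thesis
      by auto
  qed
  then show ?thesis
    unfolding nilpotent_factor_def nilpotent_factor_deriv_def has_vector_derivative_diff_const
    by (rule has_vector_derivative_mul[OF _ W_der])
qed

definition truncated_log :: "(nat \<Rightarrow> complex) \<Rightarrow> nat \<Rightarrow> complex" where
  "truncated_log \<nu> = (\<lambda>k. \<nu> k - mul \<nu> \<nu> k / 2 + mul (mul \<nu> \<nu>) \<nu> k / 3)"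

lemma has_vector_derivative_truncated_log:
  assumes \<nu>_der: "\<And>r. ((\<lambda>s. \<nu> s r) has_vector_derivative \<nu>' r) (at t within T)"
  shows "((\<lambda>s. truncated_log (\<nu> s) k) has_vector_derivative
      (\<nu>' k - mul (\<nu> t) \<nu>' k + mul (mul (\<nu> t) (\<nu> t)) \<nu>' k)) (at t within T)"
proof -
  have square_der: "((\<lambda>s. mul (\<nu> s) (\<nu> s) r) has_vector_derivative
      (mul \<nu>' (\<nu> t) r + mul (\<nu> t) \<nu>' r)) (at t within T)" for r
    by (rule has_vector_derivative_mul[OF \<nu>_der \<nu>_der])
  have "((\<lambda>s. truncated_log (\<nu> s) k) has_vector_derivative
      (\<nu>' k - (mul \<nu>' (\<nu> t) k + mul (\<nu> t) \<nu>' k) / 2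
         + (mul (\<lambda>r. mul \<nu>' (\<nu> t) r + mul (\<nu> t) \<nu>' r) (\<nu> t) k
            + mul (mul (\<nu> t) (\<nu> t)) \<nu>' k) / 3)) (at t within T)"
    unfolding truncated_log_def
    by (intro has_vector_derivative_add has_vector_derivative_diff has_vector_derivative_divide
        \<nu>_der square_der has_vector_derivative_mul[OF square_der \<nu>_der])
  moreover have "mul \<nu>' (\<nu> t) = mul (\<nu> t) \<nu>'"
    "mul (mul (\<nu> t) \<nu>') (\<nu> t) = mul (mul (\<nu> t) (\<nu> t)) \<nu>'"
    by (metis mul_commute, metis mul_assoc mul_commute)
  ultimately show ?thesis
    by (simp add: mul_add_left mul_scale_left field_simps)
qed

lemma has_integral_mul_alg_inv_derivative_nilpotent:
  assumes small_N: "n - m \<le> 3" and "a \<le> b"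
    and W: "\<And>t. alg_elem n (W t)" "\<And>t. alg_elem n (W' t)"
    and W_der: "\<And>t r. t \<in> {a..b} \<Longrightarrow>
      ((\<lambda>s. W s r) has_vector_derivative W' t r) (at t within {a..b})"
    and invertible: "\<And>t r. t \<in> {a..b} \<Longrightarrow> r \<in> {1..m} \<Longrightarrow> W t r \<noteq> 0"
    and loop: "W b = W a"
    and k: "k \<notin> {1..m}"
  shows "((\<lambda>t. mul (alg_inv m n Ups u (W t)) (W' t) k) has_integral 0) {a..b}"
proof -
  define H where "H t = truncated_log (nilpotent_factor (W t)) k" for t
  have "(H has_vector_derivative mul (alg_inv m n Ups u (W t)) (W' t) k) (at t within {a..b})"
    if t: "t \<in> {a..b}" for t
  proof -
    have "mul (alg_inv m n Ups u (W t)) (W' t) k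
        = nilpotent_factor_deriv (W t) (W' t) k
          - mul (nilpotent_factor (W t)) (nilpotent_factor_deriv (W t) (W' t)) k
          + mul (mul (nilpotent_factor (W t)) (nilpotent_factor (W t)))
              (nilpotent_factor_deriv (W t) (W' t)) k"
      by (rule mul_alg_inv_coord_nilpotent[OF small_N W _ k]) (erule invertible[OF t])
    then show ?thesis
      unfolding H_def
      by (simp only:) (intro has_vector_derivative_truncated_log
          has_vector_derivative_nilpotent_factor W_der invertible t)
  qed
  then have "((\<lambda>t. mul (alg_inv m n Ups u (W t)) (W' t) k) has_integral H b - H a) {a..b}"
    by (intro fundamental_theorem_of_calculus \<open>a \<le> b\<close>)
  then show ?thesis
    by (simp add: H_def loop)
qed

lemma continuous_on_alg_inv:
  assumes small_N: "n - m \<le> 3" and W: "\<And>t. alg_elem n (W t)"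
    and W_cont: "\<And>r. continuous_on S (\<lambda>t. W t r)"
    and invertible: "\<And>t r. t \<in> S \<Longrightarrow> r \<in> {1..m} \<Longrightarrow> W t r \<noteq> 0"
  shows "continuous_on S (\<lambda>t. alg_inv m n Ups u (W t) k)"
proof -
  have diag_cont: "continuous_on S (\<lambda>t. diag_inverse (W t) r)" for r
  proof (cases "r \<in> {1..m}")
    case True
    then have "continuous_on S (\<lambda>t. inverse (W t r))"
      using invertible by (intro continuous_on_inverse W_cont) blast
    with True show ?thesis
      by (simp add: diag_inverse_def)
  next
    case False
    then have "(\<lambda>t. diag_inverse (W t) r) = (\<lambda>t. 0)"
      by (auto simp: diag_inverse_def)
    then show ?thesis
      by (simp only: continuous_on_const)
  qed
  have nil_cont: "continuous_on S (\<lambda>t. nilpotent_factor (W t) r)" for r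
    unfolding nilpotent_factor_def
    by (intro continuous_on_diff continuous_on_const continuous_on_mul diag_cont W_cont)
  have "continuous_on S (\<lambda>t. truncated_inverse (W t) k)"
    unfolding truncated_inverse_def Let_def
    by (intro continuous_on_mul continuous_on_add continuous_on_diff continuous_on_const
        diag_cont nil_cont)
  then show ?thesis
  proof (rule continuous_on_eq)
    fix t
    assume "t \<in> S"
    then show "truncated_inverse (W t) k = alg_inv m n Ups u (W t) k"
      using alg_inv_eq_truncated_inverse[OF small_N W] invertible by simp
  qed
qed

lemma has_integral_alg_integral:
  assumes \<gamma>_der: "\<And>t. (\<gamma> has_vector_derivative \<gamma>' t) (at t)"
    and \<gamma>'_cont: "continuous_on {0..2 * pi} \<gamma>'"
    and \<Psi>_cont: "\<And>r. continuous_on {0..2 * pi} (\<lambda>t. \<Psi> (\<gamma> t) r)"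
  shows "((\<lambda>t. mul (\<Psi> (\<gamma> t)) (zeta m n a b (\<gamma>' t)) k)
    has_integral alg_integral m n Ups u a b \<gamma> \<Psi> k) {0..2 * pi}"
proof -
  define c where "c j t = complex_of_real (\<gamma>' t $ j)" for j t
  define L where "L j = restr n (\<lambda>r. line_int \<gamma> (\<lambda>P. \<Psi> P r) j)" for j
  have line_int: "((\<lambda>t. c j t * \<Psi> (\<gamma> t) r) has_integral L j r) {0..2 * pi}"
    if "r \<in> {1..n}" for r j
  proof -
    have "(\<lambda>t. c j t * \<Psi> (\<gamma> t) r) integrable_on {0..2 * pi}"
      unfolding c_def
      by (intro integrable_continuous_interval continuous_intros \<Psi>_cont \<gamma>'_cont)
    then show ?thesis
      using that
      by (simp add: L_def restr_def line_int_def c_def vector_derivative_at[OF \<gamma>_der]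
          integrable_integral mult.commute)
  qed
  have "((\<lambda>t. c 1 t * restr n (\<Psi> (\<gamma> t)) k + mul (restr n a) (\<lambda>r. c 2 t * \<Psi> (\<gamma> t) r) k
      + mul (restr n b) (\<lambda>r. c 3 t * \<Psi> (\<gamma> t) r) k)
    has_integral (L 1 k + mul (restr n a) (L 2) k + mul (restr n b) (L 3) k)) {0..2 * pi}"
  proof (intro has_integral_add has_integral_mul_right line_int)
    show "((\<lambda>t. c 1 t * restr n (\<Psi> (\<gamma> t)) k) has_integral L 1 k) {0..2 * pi}"
      using line_int[of k 1] by (cases "k \<in> {1..n}") (auto simp: L_def restr_def)
  qed
  moreover have "mul (\<Psi> (\<gamma> t)) (zeta m n a b (\<gamma>' t)) k
      = c 1 t * restr n (\<Psi> (\<gamma> t)) k + mul (restr n a) (\<lambda>r. c 2 t * \<Psi> (\<gamma> t) r) k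
        + mul (restr n b) (\<lambda>r. c 3 t * \<Psi> (\<gamma> t) r) k" for t
  proof -
    have "mul (\<Psi> (\<gamma> t)) (zeta m n a b (\<gamma>' t)) k = c 1 t * mul (\<Psi> (\<gamma> t)) e1 k
        + c 2 t * mul (\<Psi> (\<gamma> t)) (restr n a) k + c 3 t * mul (\<Psi> (\<gamma> t)) (restr n b) k"
      unfolding zeta_def c_def by (simp only: mul_add_right mul_scale_right)
    then show ?thesis
      by (simp only: mul_scale_right mul_commute[of "restr n a"] mul_commute[of "restr n b"]
          mul_commute[of "\<Psi> (\<gamma> t)" e1] mul_one_left)
  qed
  ultimately show ?thesis
    by (simp add: alg_integral_def Let_def L_def)
qed

lemma has_integral_logarithmic_derivative:
  assumes small_N: "n - m \<le> 3"
    and W: "\<And>t. alg_elem n (W t)" "\<And>t. alg_elem n (W' t)"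
    and W_der: "\<And>t r. ((\<lambda>s. W s r) has_vector_derivative W' t r) (at t)"
    and W'_cont: "\<And>r. continuous_on {0..2 * pi} (\<lambda>t. W' t r)"
    and loop: "W (2 * pi) = W 0"
    and avoids_0: "\<And>v. v \<in> {1..m} \<Longrightarrow> 0 \<notin> path_image (\<lambda>s. W (2 * pi * s) v)"
    and winding: "\<And>v. v \<in> {1..m} \<Longrightarrow> winding_number (\<lambda>s. W (2 * pi * s) v) 0 = 1"
  shows "((\<lambda>t. mul (alg_inv m n Ups u (W t)) (W' t) k) has_integral 2 * of_real pi * \<i> * e1 k)
    {0..2 * pi}"
proof -
  have invertible: "W t v \<noteq> 0" if "t \<in> {0..2 * pi}" "v \<in> {1..m}" for t v
    using nonzero_if_not_in_path_image[of "\<lambda>t. W t v", OF avoids_0[OF that(2)] that(1)] .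
  show ?thesis
  proof (cases "k \<in> {1..m}")
    case True
    have "((\<lambda>t. W' t k / W t k) has_integral 2 * pi * \<i>) {0..2 * pi}"
      using W_der W'_cont avoids_0[OF True] winding[OF True]
      by (rule has_integral_log_derivative_winding_number)
    then have "((\<lambda>t. mul (alg_inv m n Ups u (W t)) (W' t) k) has_integral 2 * pi * \<i>) {0..2 * pi}"
    proof (rule has_integral_eq[rotated])
      fix t
      assume "t \<in> {0..2 * pi}"
      then show "W' t k / W t k = mul (alg_inv m n Ups u (W t)) (W' t) k"
        using mul_alg_inv_coord_semisimple[OF small_N W(1) _ True] invertible by metis
    qed
    with True show ?thesis
      by (simp add: alg_one_def)
  next
    case False
    have "((\<lambda>t. mul (alg_inv m n Ups u (W t)) (W' t) k) has_integral 0) {0..2 * pi}"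
    proof (rule has_integral_mul_alg_inv_derivative_nilpotent[OF small_N _ W _ invertible loop False])
      show "((\<lambda>s. W s r) has_vector_derivative W' t r) (at t within {0..2 * pi})" for t r
        using W_der by (rule has_vector_derivative_at_within)
    qed simp
    moreover have "e1 k = 0"
      using False by (simp add: alg_one_def)
    ultimately show ?thesis
      by simp
  qed
qed

lemma alg_elem_zeta: "alg_elem n (zeta m n a b P)"
  using m_le_n unfolding zeta_def alg_elem_def alg_one_def restr_def by auto

lemma has_vector_derivative_zeta:
  assumes "(\<gamma> has_vector_derivative \<gamma>') F"
  shows "((\<lambda>s. zeta m n a b (\<gamma> s) k) has_vector_derivative zeta m n a b \<gamma>' k) F"
proof -
  have "((\<lambda>s. \<gamma> s $ j) has_real_derivative \<gamma>' $ j) F" for j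
    using bounded_linear.has_vector_derivative[OF bounded_linear_vec_nth assms]
    by (simp add: has_real_derivative_iff_has_vector_derivative)
  then show ?thesis
    unfolding zeta_def by (auto intro!: derivative_eq_intros)
qed

lemma alg_integral_inverse_closed_curve:
  assumes small_N: "n - m \<le> 3"
    and \<gamma>_der: "\<And>t. (\<gamma> has_vector_derivative \<gamma>' t) (at t)"
    and \<gamma>'_cont: "continuous_on {0..2 * pi} \<gamma>'"
    and closed: "\<gamma> (2 * pi) = \<gamma> 0"
    and avoids_0: "\<And>v. v \<in> {1..m} \<Longrightarrow>
      0 \<notin> path_image (\<lambda>s. f_coord v (zeta m n a b (\<gamma> (2 * pi * s))))"
    and winding: "\<And>v. v \<in> {1..m} \<Longrightarrow>
      winding_number (\<lambda>s. f_coord v (zeta m n a b (\<gamma> (2 * pi * s)))) 0 = 1"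
  shows "alg_integral m n Ups u a b \<gamma> (\<lambda>P. alg_inv m n Ups u (zeta m n a b P))
    = (\<lambda>k. 2 * of_real pi * \<i> * e1 k)"
proof
  fix k
  define W where "W t = zeta m n a b (\<gamma> t)" for t
  define W' where "W' t = zeta m n a b (\<gamma>' t)" for t
  have W_elem: "alg_elem n (W t)" "alg_elem n (W' t)" for t
    unfolding W_def W'_def by (simp_all add: alg_elem_zeta)
  have W_der: "((\<lambda>s. W s r) has_vector_derivative W' t r) (at t)" for t r
    unfolding W_def W'_def by (rule has_vector_derivative_zeta[OF \<gamma>_der])
  have W_cont: "continuous_on S (\<lambda>t. W t r)" for S r
    by (rule continuous_on_vector_derivative) (rule has_vector_derivative_at_within[OF W_der])
  have W'_cont: "continuous_on {0..2 * pi} (\<lambda>t. W' t r)" for r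
    unfolding W'_def zeta_def by (intro continuous_intros \<gamma>'_cont)
  have invertible: "W t v \<noteq> 0" if "t \<in> {0..2 * pi}" "v \<in> {1..m}" for t v
    using nonzero_if_not_in_path_image[of "\<lambda>t. W t v", OF _ that(1)] avoids_0[OF that(2)]
    by (simp add: W_def f_coord_def)
  have "((\<lambda>t. mul (alg_inv m n Ups u (W t)) (W' t) k) has_integral
      alg_integral m n Ups u a b \<gamma> (\<lambda>P. alg_inv m n Ups u (zeta m n a b P)) k) {0..2 * pi}"
    unfolding W_def W'_def
    by (intro has_integral_alg_integral \<gamma>_der \<gamma>'_cont
        continuous_on_alg_inv[OF small_N W_elem(1) W_cont invertible, unfolded W_def])
  moreover have "((\<lambda>t. mul (alg_inv m n Ups u (W t)) (W' t) k) has_integral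
      2 * of_real pi * \<i> * e1 k) {0..2 * pi}"
    using avoids_0 winding
    by (intro has_integral_logarithmic_derivative[OF small_N W_elem W_der W'_cont])
      (simp_all add: W_def closed f_coord_def)
  ultimately show "alg_integral m n Ups u a b \<gamma> (\<lambda>P. alg_inv m n Ups u (zeta m n a b P)) k
      = 2 * of_real pi * \<i> * e1 k"
    by (rule has_integral_unique)
qed

end

lemma circ_has_vector_derivative:
  "(circ R p q has_vector_derivative circ R p q (t + pi / 2)) (at t)"
  unfolding circ_def by (auto intro!: derivative_eq_intros simp: cos_add sin_add algebra_simps)

theorem theorem7:
  fixes m n :: nat and Ups :: "nat \<Rightarrow> nat \<Rightarrow> nat \<Rightarrow> complex" and u :: "nat \<Rightarrow> nat"
    and a b :: "nat \<Rightarrow> complex" and R :: real and p q :: "real^3"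
  assumes alg: "is_algebra_Anm m n Ups u"
    and dimN: "n - m \<le> 3"
    and indep: "\<And>x y z :: real. (\<lambda>k. of_real x * alg_one m k + of_real y * restr n a k + of_real z * restr n b k) = (\<lambda>_. 0)
                  \<Longrightarrow> x = 0 \<and> y = 0 \<and> z = 0"
    and standing: "\<And>v. v \<in> {1..m} \<Longrightarrow> f_coord v ` range (zeta m n a b) = UNIV"
    and R: "R > 0"
    and pq: "norm p = 1" "norm q = 1" "p \<bullet> q = 0"
    and curve: "\<And>v. v \<in> {1..m} \<Longrightarrow>
       (let g = (\<lambda>t. f_coord v (zeta m n a b (circ R p q (2 * pi * t))))
        in simple_path g \<and> 0 \<in> inside (path_image g) \<and> winding_number g 0 = 1)"
  shows "alg_integral m n Ups u a b (circ R p q) (\<lambda>P. alg_inv m n Ups u (zeta m n a b P))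
           = (\<lambda>k. 2 * of_real pi * \<i> * alg_one m k)"
proof -
  interpret Anm_algebra m n Ups u
    by (rule Anm_algebra.intro[OF alg])
  show ?thesis
  proof (rule alg_integral_inverse_closed_curve[OF dimN circ_has_vector_derivative])
    show "continuous_on {0..2 * pi} (\<lambda>t. circ R p q (t + pi / 2))"
      unfolding circ_def by (intro continuous_intros)
    show "circ R p q (2 * pi) = circ R p q 0"
      by (simp add: circ_def)
  next
    fix v
    assume "v \<in> {1..m}"
    then show "0 \<notin> path_image (\<lambda>s. f_coord v (zeta m n a b (circ R p q (2 * pi * s))))"
      and "winding_number (\<lambda>s. f_coord v (zeta m n a b (circ R p q (2 * pi * s)))) 0 = 1"
      using curve inside_no_overlap unfolding Let_def by blast+
  qed
qed

end
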